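(* Consider the lower-bound type system, and assume the program is well-typed w.r.t. the signature $\Sigma$ in that system. Let $\models E:\Gamma$, $E\vdash e\Downarrow v$, and suppose $\Sigma;\Gamma\vdash^{q}_{q'}e:A$ is derivable in the lower-bound type system. Then for all $p,p'\in\mathbb Q_{\ge0}$ with $E\vdash^{p}_{p'}e\Downarrow v$ we have $$q+\Phi_E(\Gamma)-\bigl(q'+\Phi(v:A)\bigr)\le p-p'.$$
   Context: Base types: $T ::= \mathsf{unit}\mid\mathsf{bool}\mid\mathsf{int}\mid L(T)\mid T*T$. Values: $v ::= () \mid \mathsf{true}\mid\mathsf{false}\mid n\ (n\in\mathbb Z)\mid [v_1,\dots,v_n]\ (n\ge 0$, the empty list being $\mathsf{nil})\mid (v_1,v_2)$. Value typing $\models v:T$: $()$ has type $\mathsf{unit}$, booleans have type $\mathsf{bool}$, integers have type $\mathsf{int}$, $(v_1,v_2):T_1*T_2$ if $\models v_i:T_i$, and $[v_1,\dots,v_n]:L(T)$ if every $\models v_i:T$ (so $\mathsf{nil}$ has every list type). Expressions (let-normal form; $x,x_i$ are variables, $f$ function identifiers): $e ::= () \mid \mathsf{true}\mid \mathsf{false}\mid n\mid x\mid \mathrm{op}_\diamond(x_1,x_2)\mid \mathrm{app}(f,x)\mid \mathrm{if}(x,e_t,e_f)\mid \mathrm{let}(x,e_1,x.e_2)\mid \mathrm{pair}(x_1,x_2)\mid \mathrm{match}(x,(x_1,x_2).e)\mid \mathsf{nil}\mid \mathrm{cons}(x_1,x_2)\mid\mathrm{match}(x,e_1,(x_h,x_t).e_2)\mid\mathrm{share}(x,(x_1,x_2).e)$,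 with $\diamond\in\{+,-,*,\mathrm{div},\mathrm{mod},=,<>,<,>,\mathrm{and},\mathrm{or}\}$. A program fixes for each function identifier $f$ a body $e_f$ with a single parameter variable $y^f$. An environment $E$ is a finite map from variables to values. Cost semantics: fix arbitrary rational constants $K^{\mathrm{unit}},K^{\mathrm{bool}},K^{\mathrm{int}},K^{\mathrm{nil}},K^{\mathrm{var}},K^{\mathrm{op}},K^{\mathrm{app}},K^{\mathrm{let}},K^{\mathrm{cond}},K^{\mathrm{pair}},K^{\mathrm{matchP}},K^{\mathrm{cons}},K^{\mathrm{matchN}},K^{\mathrm{matchL}}$. The judgement $E\vdash^{q}_{q'} e\Downarrow v$ (all counters $q,q'$ occurring in derivations are in $\mathbb Q_{\ge0}$) is defined inductively: $E\vdash^{q+K^{c}}_{q}c\Downarrow c$ for constants $c\in\{(),\mathsf{true},\mathsf{false},n,\mathsf{nil}\}$ with the corresponding constant $K^{\mathrm{unit}},K^{\mathrm{bool}},K^{\mathrm{int}},K^{\mathrm{nil}}$; $E\vdash^{q+K^{\mathrm{var}}}_q x\Downarrow E(x)$ for $x\in\mathrm{dom}(E)$; $E\vdash^{q+K^{\mathrm{op}}}_q\mathrm{op}_\diamond(x_1,x_2)\Downarrow E(x_1)\diamond E(x_2)$; $E\vdash^{q+K^{\mathrm{pair}}}_q \mathrm{pair}(x_1,x_2)\Downarrow (E(x_1),E(x_2))$; $E\vdash^{q+K^{\mathrm{cons}}}_q\mathrm{cons}(x_h,x_t)\Downarrow[v_1,\dots,v_n]$ if $E(x_h)=v_1$ and $E(x_t)=[v_2,\dots,v_n]$;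 if $E[y^f\mapsto E(x)]\vdash^q_{q'}e_f\Downarrow v$ then $E\vdash^{q+K^{\mathrm{app}}}_{q'}\mathrm{app}(f,x)\Downarrow v$; if $E\vdash^{q-K^{\mathrm{let}}}_{q_1}e_1\Downarrow v_1$ and $E[x\mapsto v_1]\vdash^{q_1}_{q'}e_2\Downarrow v$ then $E\vdash^q_{q'}\mathrm{let}(x,e_1,x.e_2)\Downarrow v$; if $E(x)=\mathsf{true}$ and $E\vdash^{q-K^{\mathrm{cond}}}_{q'}e_t\Downarrow v$ (resp. $E(x)=\mathsf{false}$ and $E\vdash^{q-K^{\mathrm{cond}}}_{q'}e_f\Downarrow v$) then $E\vdash^q_{q'}\mathrm{if}(x,e_t,e_f)\Downarrow v$; if $E(x)=(v_1,v_2)$ and $E[x_1\mapsto v_1,x_2\mapsto v_2]\vdash^{q-K^{\mathrm{matchP}}}_{q'}e\Downarrow v$ then $E\vdash^q_{q'}\mathrm{match}(x,(x_1,x_2).e)\Downarrow v$; if $E(x)=\mathsf{nil}$ and $E\vdash^{q-K^{\mathrm{matchN}}}_{q'}e_1\Downarrow v$ then $E\vdash^q_{q'}\mathrm{match}(x,e_1,(x_h,x_t).e_2)\Downarrow v$; if $E(x)=[v_1,\dots,v_n]$ with $n\ge1$ and $E[x_h\mapsto v_1,x_t\mapsto[v_2,\dots,v_n]]\vdash^{q-K^{\mathrm{matchL}}}_{q'}e_2\Downarrow v$ then $E\vdash^q_{q'}\mathrm{match}(x,e_1,(x_h,x_t).e_2)\Downarrow v$; if $E(x)=v_1$ and $(E\setminus\{x\})[x_1\mapsto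 v_1,x_2\mapsto v_1]\vdash^q_{q'}e\Downarrow v$ then $E\vdash^q_{q'}\mathrm{share}(x,(x_1,x_2).e)\Downarrow v$. We write $E\vdash e\Downarrow v$ if $E\vdash^q_{q'}e\Downarrow v$ for some $q,q'$. Resource-annotated types: $A ::= \mathsf{unit}\mid\mathsf{bool}\mid\mathsf{int}\mid L^p(A)\mid A*A$ with $p\in\mathbb Q_{\ge0}$; $|A|$ denotes the base type obtained by erasing annotations. An annotated context $\Gamma$ is a finite map from variables to annotated types; $\Gamma_1,\Gamma_2$ denotes the union of contexts with disjoint domains (contexts are unordered). $\models E:\Gamma$ means $\models E(x):|\Gamma(x)|$ for all $x\in\mathrm{dom}(\Gamma)$. Potential: $\Phi(v:A)=0$ for $A\in\{\mathsf{unit},\mathsf{bool},\mathsf{int}\}$; $\Phi((v_1,v_2):A_1*A_2)=\Phi(v_1:A_1)+\Phi(v_2:A_2)$; $\Phi([v_1,\dots,v_n]:L^p(A))=n\cdot p+\sum_{i=1}^n\Phi(v_i:A)$; $\Phi_E(\Gamma)=\sum_{x\in\mathrm{dom}(\Gamma)}\Phi(E(x):\Gamma(x))$. Sharing relation: $\curlyvee(A\mid A,A)$ for $A\in\{\mathsf{unit},\mathsf{bool},\mathsf{int}\}$; $\curlyvee(A*B\mid A_1*B_1,A_2*B_2)$ if $\curlyvee(A\mid A_1,A_2)$ and $\curlyvee(B\mid B_1,B_2)$; $\curlyvee(L^p(A)\mid L^{p_1}(A_1),L^{p_2}(A_2))$ if $\curlyvee(A\mid A_1,A_2)$ and $p=p_1+p_2$.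 Subtyping $\preceq$: $A\preceq A$ for atoms; $L^{p_1}(A_1)\preceq L^{p_2}(A_2)$ if $A_1\preceq A_2$ and $p_1\le p_2$; $A_1*B_1\preceq A_2*B_2$ if $A_1\preceq A_2$ and $B_1\preceq B_2$. A signature $\Sigma$ maps function identifiers to nonempty sets of annotated function types $A_1\xrightarrow{q/q'}A_2$ ($q,q'\in\mathbb Q_{\ge0}$). Typing judgements $\Sigma;\Gamma\vdash^{q}_{q'}e:A$ with $q,q'\in\mathbb Q_{\ge0}$ (every annotation in a rule instance must be a nonnegative rational). Syntax-directed rules: $\Sigma;\emptyset\vdash^{K^{\mathrm{unit}}}_0():\mathsf{unit}$; $\Sigma;\emptyset\vdash^{K^{\mathrm{bool}}}_0 b:\mathsf{bool}$; $\Sigma;\emptyset\vdash^{K^{\mathrm{int}}}_0 n:\mathsf{int}$; $\Sigma;\emptyset\vdash^{K^{\mathrm{nil}}}_0\mathsf{nil}:L^p(A)$; $\Sigma;x:A\vdash^{K^{\mathrm{var}}}_0x:A$; $\Sigma;x_1:\mathsf{bool},x_2:\mathsf{bool}\vdash^{K^{\mathrm{op}}}_0\mathrm{op}_\diamond(x_1,x_2):\mathsf{bool}$ for $\diamond\in\{\mathrm{and},\mathrm{or}\}$; $\Sigma;x_1:\mathsf{int},x_2:\mathsf{int}\vdash^{K^{\mathrm{op}}}_0\mathrm{op}_\diamond(x_1,x_2):\mathsf{bool}$ for comparisons and $:\mathsf{int}$ for $+,-,*,\mathrm{div},\mathrm{mod}$; if $A_1\xrightarrow{q/q'}A_2\in\Sigma(f)$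 then $\Sigma;x:A_1\vdash^{q+K^{\mathrm{app}}}_{q'}\mathrm{app}(f,x):A_2$; from $\Sigma;\Gamma_1\vdash^{q-K^{\mathrm{let}}}_{q_1}e_1:A_1$ and $\Sigma;\Gamma_2,x:A_1\vdash^{q_1}_{q'}e_2:A_2$ infer $\Sigma;\Gamma_1,\Gamma_2\vdash^q_{q'}\mathrm{let}(x,e_1,x.e_2):A_2$; from $\Sigma;\Gamma\vdash^{q-K^{\mathrm{cond}}}_{q'}e_t:A$ and $\Sigma;\Gamma\vdash^{q-K^{\mathrm{cond}}}_{q'}e_f:A$ infer $\Sigma;\Gamma,x:\mathsf{bool}\vdash^q_{q'}\mathrm{if}(x,e_t,e_f):A$; $\Sigma;x_1:A_1,x_2:A_2\vdash^{K^{\mathrm{pair}}}_0\mathrm{pair}(x_1,x_2):A_1*A_2$; from $\Sigma;\Gamma,x_1:A_1,x_2:A_2\vdash^{q-K^{\mathrm{matchP}}}_{q'}e:A$ infer $\Sigma;\Gamma,x:A_1*A_2\vdash^q_{q'}\mathrm{match}(x,(x_1,x_2).e):A$; $\Sigma;x_h:A,x_t:L^p(A)\vdash^{p+K^{\mathrm{cons}}}_0\mathrm{cons}(x_h,x_t):L^p(A)$; from $\Sigma;\Gamma\vdash^{q-K^{\mathrm{matchN}}}_{q'}e_1:B$ and $\Sigma;\Gamma,x_h:A,x_t:L^p(A)\vdash^{q+p-K^{\mathrm{matchL}}}_{q'}e_2:B$ infer $\Sigma;\Gamma,x:L^p(A)\vdash^q_{q'}\mathrm{match}(x,e_1,(x_h,x_t).e_2):B$;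 from $\Sigma;\Gamma,x_1:A_1,x_2:A_2\vdash^q_{q'}e:B$ and $\curlyvee(A\mid A_1,A_2)$ infer $\Sigma;\Gamma,x:A\vdash^q_{q'}\mathrm{share}(x,(x_1,x_2).e):B$. Structural rules of the lower-bound system: (Relax) from $\Sigma;\Gamma\vdash^p_{p'}e:A$, $q\ge p$ and $q-p\le q'-p'$ infer $\Sigma;\Gamma\vdash^q_{q'}e:A$; (Weakening) from $\Sigma;\Gamma\vdash^q_{q'}e:B$ and $\curlyvee(A\mid A,A)$ infer $\Sigma;\Gamma,x:A\vdash^q_{q'}e:B$; (Subtype) from $\Sigma;\Gamma\vdash^q_{q'}e:A$ and $A\preceq B$ infer $\Sigma;\Gamma\vdash^q_{q'}e:B$; (Supertype) from $\Sigma;\Gamma,x:B\vdash^q_{q'}e:C$ and $A\preceq B$ infer $\Sigma;\Gamma,x:A\vdash^q_{q'}e:C$. The program is well-typed w.r.t. $\Sigma$ in this system if for every $f$ and every $A_1\xrightarrow{q/q'}A_2\in\Sigma(f)$, $\Sigma;y^f:A_1\vdash^q_{q'}e_f:A_2$ is derivable. *)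

theory Defs
  imports Complex_Main
begin

type_synonym var = string
type_synonym fname = string

datatype bty = TUnit | TBool | TInt | TList bty | TProd bty bty

datatype vl = VUnit | VBool bool | VInt int | VList "vl list" | VPair vl vl

fun vtyp :: "vl \<Rightarrow> bty \<Rightarrow> bool" where
  "vtyp VUnit TUnit = True"
| "vtyp (VBool b) TBool = True"
| "vtyp (VInt n) TInt = True"
| "vtyp (VPair v1 v2) (TProd T1 T2) = (vtyp v1 T1 \<and> vtyp v2 T2)"
| "vtyp (VList vs) (TList T) = (\<forall>v\<in>set vs. vtyp v T)"
| "vtyp _ _ = False"

datatype binop = OAdd | OSub | OMul | ODiv | OMod | OEq | ONeq | OLt | OGt | OAnd | OOr

datatype expr =
    EUnit | ETrue | EFalse | EInt int | EVar var
  | EOp binop var var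
  | EApp fname var
  | EIf var expr expr
  | ELet var expr expr
  | EPair var var
  | EMatchP var var var expr
  | ENil
  | ECons var var
  | EMatchL var expr var var expr
  | EShare var var var expr

type_synonym prog = "fname \<Rightarrow> var \<times> expr"

type_synonym env = "var \<rightharpoonup> vl"

fun eval_op :: "binop \<Rightarrow> vl \<Rightarrow> vl \<Rightarrow> vl option" where
  "eval_op OAdd (VInt a) (VInt b) = Some (VInt (a + b))"
| "eval_op OSub (VInt a) (VInt b) = Some (VInt (a - b))"
| "eval_op OMul (VInt a) (VInt b) = Some (VInt (a * b))"
| "eval_op ODiv (VInt a) (VInt b) = Some (VInt (a div b))"
| "eval_op OMod (VInt a) (VInt b) = Some (VInt (a mod b))"
| "eval_op OEq (VInt a) (VInt b) = Some (VBool (a = b))"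
| "eval_op ONeq (VInt a) (VInt b) = Some (VBool (a \<noteq> b))"
| "eval_op OLt (VInt a) (VInt b) = Some (VBool (a < b))"
| "eval_op OGt (VInt a) (VInt b) = Some (VBool (a > b))"
| "eval_op OAnd (VBool a) (VBool b) = Some (VBool (a \<and> b))"
| "eval_op OOr (VBool a) (VBool b) = Some (VBool (a \<or> b))"
| "eval_op _ _ _ = None"

datatype kc = Kunit | Kbool | Kint | Knil | Kvar | Kop | Kapp | Klet | Kcond | Kpair
  | KmatchP | Kcons | KmatchN | KmatchL

type_synonym costs = "kc \<Rightarrow> rat"

section \<open>Cost semantics  E |- q / q' e \<Down> v\<close>

inductive bigstep :: "costs \<Rightarrow> prog \<Rightarrow> env \<Rightarrow> rat \<Rightarrow> rat \<Rightarrow> expr \<Rightarrow> vl \<Rightarrow> bool" where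
  BUnit: "\<lbrakk>0 \<le> q'; q = q' + K Kunit; 0 \<le> q\<rbrakk> \<Longrightarrow> bigstep K P E q q' EUnit VUnit"
| BTrue: "\<lbrakk>0 \<le> q'; q = q' + K Kbool; 0 \<le> q\<rbrakk> \<Longrightarrow> bigstep K P E q q' ETrue (VBool True)"
| BFalse: "\<lbrakk>0 \<le> q'; q = q' + K Kbool; 0 \<le> q\<rbrakk> \<Longrightarrow> bigstep K P E q q' EFalse (VBool False)"
| BInt: "\<lbrakk>0 \<le> q'; q = q' + K Kint; 0 \<le> q\<rbrakk> \<Longrightarrow> bigstep K P E q q' (EInt n) (VInt n)"
| BNil: "\<lbrakk>0 \<le> q'; q = q' + K Knil; 0 \<le> q\<rbrakk> \<Longrightarrow> bigstep K P E q q' ENil (VList [])"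
| BVar: "\<lbrakk>E x = Some v; 0 \<le> q'; q = q' + K Kvar; 0 \<le> q\<rbrakk> \<Longrightarrow> bigstep K P E q q' (EVar x) v"
| BOp: "\<lbrakk>E x1 = Some v1; E x2 = Some v2; eval_op op v1 v2 = Some v;
          0 \<le> q'; q = q' + K Kop; 0 \<le> q\<rbrakk> \<Longrightarrow> bigstep K P E q q' (EOp op x1 x2) v"
| BPair: "\<lbrakk>E x1 = Some v1; E x2 = Some v2; 0 \<le> q'; q = q' + K Kpair; 0 \<le> q\<rbrakk>
          \<Longrightarrow> bigstep K P E q q' (EPair x1 x2) (VPair v1 v2)"
| BCons: "\<lbrakk>E xh = Some v1; E xt = Some (VList vs); 0 \<le> q'; q = q' + K Kcons; 0 \<le> q\<rbrakk>
          \<Longrightarrow> bigstep K P E q q' (ECons xh xt) (VList (v1 # vs))"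
| BApp: "\<lbrakk>E x = Some u; P f = (y, ef); bigstep K P (E(y \<mapsto> u)) p q' ef v;
          q = p + K Kapp; 0 \<le> q\<rbrakk>
          \<Longrightarrow> bigstep K P E q q' (EApp f x) v"
| BLet: "\<lbrakk>bigstep K P E (q - K Klet) q1 e1 v1; bigstep K P (E(x \<mapsto> v1)) q1 q' e2 v; 0 \<le> q\<rbrakk>
          \<Longrightarrow> bigstep K P E q q' (ELet x e1 e2) v"
| BIfT: "\<lbrakk>E x = Some (VBool True); bigstep K P E (q - K Kcond) q' et v; 0 \<le> q\<rbrakk>
          \<Longrightarrow> bigstep K P E q q' (EIf x et ef) v"
| BIfF: "\<lbrakk>E x = Some (VBool False); bigstep K P E (q - K Kcond) q' ef v; 0 \<le> q\<rbrakk>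
          \<Longrightarrow> bigstep K P E q q' (EIf x et ef) v"
| BMatchP: "\<lbrakk>E x = Some (VPair v1 v2); bigstep K P (E(x1 \<mapsto> v1, x2 \<mapsto> v2)) (q - K KmatchP) q' e v;
          0 \<le> q\<rbrakk> \<Longrightarrow> bigstep K P E q q' (EMatchP x x1 x2 e) v"
| BMatchN: "\<lbrakk>E x = Some (VList []); bigstep K P E (q - K KmatchN) q' e1 v; 0 \<le> q\<rbrakk>
          \<Longrightarrow> bigstep K P E q q' (EMatchL x e1 xh xt e2) v"
| BMatchC: "\<lbrakk>E x = Some (VList (v1 # vs));
          bigstep K P (E(xh \<mapsto> v1, xt \<mapsto> VList vs)) (q - K KmatchL) q' e2 v; 0 \<le> q\<rbrakk>
          \<Longrightarrow> bigstep K P E q q' (EMatchL x e1 xh xt e2) v"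
| BShare: "\<lbrakk>E x = Some v1; bigstep K P ((E(x := None))(x1 \<mapsto> v1, x2 \<mapsto> v1)) q q' e v\<rbrakk>
          \<Longrightarrow> bigstep K P E q q' (EShare x x1 x2 e) v"

definition evaluates :: "costs \<Rightarrow> prog \<Rightarrow> env \<Rightarrow> expr \<Rightarrow> vl \<Rightarrow> bool" where
  "evaluates K P E e v \<longleftrightarrow> (\<exists>q q'. bigstep K P E q q' e v)"

datatype aty = AUnit | ABool | AInt | AList rat aty | APair aty aty

fun erase :: "aty \<Rightarrow> bty" where
  "erase AUnit = TUnit" | "erase ABool = TBool" | "erase AInt = TInt"
| "erase (AList p A) = TList (erase A)"
| "erase (APair A B) = TProd (erase A) (erase B)"

fun nonneg_aty :: "aty \<Rightarrow> bool" where
  "nonneg_aty (AList p A) = (0 \<le> p \<and> nonneg_aty A)"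
| "nonneg_aty (APair A B) = (nonneg_aty A \<and> nonneg_aty B)"
| "nonneg_aty _ = True"

type_synonym ctx = "var \<rightharpoonup> aty"

definition env_typed :: "env \<Rightarrow> ctx \<Rightarrow> bool" where
  "env_typed E \<Gamma> \<longleftrightarrow> (\<forall>x A. \<Gamma> x = Some A \<longrightarrow> (\<exists>v. E x = Some v \<and> vtyp v (erase A)))"

fun pot :: "vl \<Rightarrow> aty \<Rightarrow> rat" where
  "pot (VPair v1 v2) (APair A1 A2) = pot v1 A1 + pot v2 A2"
| "pot (VList vs) (AList p A) = of_nat (length vs) * p + (\<Sum>v\<leftarrow>vs. pot v A)"
| "pot _ _ = 0"

definition pot_ctx :: "env \<Rightarrow> ctx \<Rightarrow> rat" where
  "pot_ctx E \<Gamma> = (\<Sum>x\<in>dom \<Gamma>. pot (the (E x)) (the (\<Gamma> x)))"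

inductive share :: "aty \<Rightarrow> aty \<Rightarrow> aty \<Rightarrow> bool" where
  "share AUnit AUnit AUnit"
| "share ABool ABool ABool"
| "share AInt AInt AInt"
| "share A A1 A2 \<Longrightarrow> share B B1 B2 \<Longrightarrow> share (APair A B) (APair A1 B1) (APair A2 B2)"
| "share A A1 A2 \<Longrightarrow> p = p1 + p2 \<Longrightarrow> share (AList p A) (AList p1 A1) (AList p2 A2)"

inductive subty :: "aty \<Rightarrow> aty \<Rightarrow> bool" where
  "subty AUnit AUnit"
| "subty ABool ABool"
| "subty AInt AInt"
| "subty A1 A2 \<Longrightarrow> p1 \<le> p2 \<Longrightarrow> subty (AList p1 A1) (AList p2 A2)"
| "subty A1 A2 \<Longrightarrow> subty B1 B2 \<Longrightarrow> subty (APair A1 B1) (APair A2 B2)"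

text \<open>Annotated function types A1 -q/q'-> A2 as tuples (A1, q, q', A2).\<close>
type_synonym fty = "aty \<times> rat \<times> rat \<times> aty"
type_synonym signature = "fname \<Rightarrow> fty set"

definition valid_sig :: "signature \<Rightarrow> bool" where
  "valid_sig \<Sigma> \<longleftrightarrow> (\<forall>f. \<Sigma> f \<noteq> {} \<and>
     (\<forall>(A1, q, q', A2) \<in> \<Sigma> f. 0 \<le> q \<and> 0 \<le> q' \<and> nonneg_aty A1 \<and> nonneg_aty A2))"

definition ok :: "ctx \<Rightarrow> rat \<Rightarrow> rat \<Rightarrow> aty \<Rightarrow> bool" where
  "ok \<Gamma> q q' A \<longleftrightarrow> 0 \<le> q \<and> 0 \<le> q' \<and> nonneg_aty A \<and> (\<forall>x B. \<Gamma> x = Some B \<longrightarrow> nonneg_aty B)"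

definition arith_op :: "binop \<Rightarrow> bool" where
  "arith_op op \<longleftrightarrow> op \<in> {OAdd, OSub, OMul, ODiv, OMod}"
definition cmp_op :: "binop \<Rightarrow> bool" where
  "cmp_op op \<longleftrightarrow> op \<in> {OEq, ONeq, OLt, OGt}"
definition bool_op :: "binop \<Rightarrow> bool" where
  "bool_op op \<longleftrightarrow> op \<in> {OAnd, OOr}"

inductive lbty :: "costs \<Rightarrow> signature \<Rightarrow> ctx \<Rightarrow> rat \<Rightarrow> rat \<Rightarrow> expr \<Rightarrow> aty \<Rightarrow> bool" where
  TUnit: "ok Map.empty (K Kunit) 0 AUnit \<Longrightarrow> lbty K \<Sigma> Map.empty (K Kunit) 0 EUnit AUnit"
| TTrue: "ok Map.empty (K Kbool) 0 ABool \<Longrightarrow> lbty K \<Sigma> Map.empty (K Kbool) 0 ETrue ABool"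
| TFalse: "ok Map.empty (K Kbool) 0 ABool \<Longrightarrow> lbty K \<Sigma> Map.empty (K Kbool) 0 EFalse ABool"
| TInt: "ok Map.empty (K Kint) 0 AInt \<Longrightarrow> lbty K \<Sigma> Map.empty (K Kint) 0 (EInt n) AInt"
| TNil: "ok Map.empty (K Knil) 0 (AList p A) \<Longrightarrow> lbty K \<Sigma> Map.empty (K Knil) 0 ENil (AList p A)"
| TVar: "ok [x \<mapsto> A] (K Kvar) 0 A \<Longrightarrow> lbty K \<Sigma> [x \<mapsto> A] (K Kvar) 0 (EVar x) A"
| TOpB: "\<lbrakk>bool_op op; x1 \<noteq> x2; ok [x1 \<mapsto> ABool, x2 \<mapsto> ABool] (K Kop) 0 ABool\<rbrakk>
         \<Longrightarrow> lbty K \<Sigma> [x1 \<mapsto> ABool, x2 \<mapsto> ABool] (K Kop) 0 (EOp op x1 x2) ABool"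
| TOpC: "\<lbrakk>cmp_op op; x1 \<noteq> x2; ok [x1 \<mapsto> AInt, x2 \<mapsto> AInt] (K Kop) 0 ABool\<rbrakk>
         \<Longrightarrow> lbty K \<Sigma> [x1 \<mapsto> AInt, x2 \<mapsto> AInt] (K Kop) 0 (EOp op x1 x2) ABool"
| TOpA: "\<lbrakk>arith_op op; x1 \<noteq> x2; ok [x1 \<mapsto> AInt, x2 \<mapsto> AInt] (K Kop) 0 AInt\<rbrakk>
         \<Longrightarrow> lbty K \<Sigma> [x1 \<mapsto> AInt, x2 \<mapsto> AInt] (K Kop) 0 (EOp op x1 x2) AInt"
| TApp: "\<lbrakk>(A1, q, q', A2) \<in> \<Sigma> f; ok [x \<mapsto> A1] (q + K Kapp) q' A2\<rbrakk>
         \<Longrightarrow> lbty K \<Sigma> [x \<mapsto> A1] (q + K Kapp) q' (EApp f x) A2"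
| TLet: "\<lbrakk>lbty K \<Sigma> \<Gamma>1 (q - K Klet) q1 e1 A1; lbty K \<Sigma> (\<Gamma>2(x \<mapsto> A1)) q1 q' e2 A2;
          dom \<Gamma>1 \<inter> dom \<Gamma>2 = {}; x \<notin> dom \<Gamma>2; ok (\<Gamma>1 ++ \<Gamma>2) q q' A2\<rbrakk>
         \<Longrightarrow> lbty K \<Sigma> (\<Gamma>1 ++ \<Gamma>2) q q' (ELet x e1 e2) A2"
| TIf: "\<lbrakk>lbty K \<Sigma> \<Gamma> (q - K Kcond) q' et A; lbty K \<Sigma> \<Gamma> (q - K Kcond) q' ef A;
          x \<notin> dom \<Gamma>; ok (\<Gamma>(x \<mapsto> ABool)) q q' A\<rbrakk>
         \<Longrightarrow> lbty K \<Sigma> (\<Gamma>(x \<mapsto> ABool)) q q' (EIf x et ef) A"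
| TPair: "\<lbrakk>x1 \<noteq> x2; ok [x1 \<mapsto> A1, x2 \<mapsto> A2] (K Kpair) 0 (APair A1 A2)\<rbrakk>
         \<Longrightarrow> lbty K \<Sigma> [x1 \<mapsto> A1, x2 \<mapsto> A2] (K Kpair) 0 (EPair x1 x2) (APair A1 A2)"
| TMatchP: "\<lbrakk>lbty K \<Sigma> (\<Gamma>(x1 \<mapsto> A1, x2 \<mapsto> A2)) (q - K KmatchP) q' e A;
          x1 \<noteq> x2; x1 \<notin> dom \<Gamma>; x2 \<notin> dom \<Gamma>; x \<notin> dom \<Gamma>;
          ok (\<Gamma>(x \<mapsto> APair A1 A2)) q q' A\<rbrakk>
         \<Longrightarrow> lbty K \<Sigma> (\<Gamma>(x \<mapsto> APair A1 A2)) q q' (EMatchP x x1 x2 e) A"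
| TCons: "\<lbrakk>xh \<noteq> xt; ok [xh \<mapsto> A, xt \<mapsto> AList p A] (p + K Kcons) 0 (AList p A)\<rbrakk>
         \<Longrightarrow> lbty K \<Sigma> [xh \<mapsto> A, xt \<mapsto> AList p A] (p + K Kcons) 0 (ECons xh xt) (AList p A)"
| TMatchL: "\<lbrakk>lbty K \<Sigma> \<Gamma> (q - K KmatchN) q' e1 B;
          lbty K \<Sigma> (\<Gamma>(xh \<mapsto> A, xt \<mapsto> AList p A)) (q + p - K KmatchL) q' e2 B;
          xh \<noteq> xt; xh \<notin> dom \<Gamma>; xt \<notin> dom \<Gamma>; x \<notin> dom \<Gamma>;
          ok (\<Gamma>(x \<mapsto> AList p A)) q q' B\<rbrakk>
         \<Longrightarrow> lbty K \<Sigma> (\<Gamma>(x \<mapsto> AList p A)) q q' (EMatchL x e1 xh xt e2) B"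
| TShare: "\<lbrakk>lbty K \<Sigma> (\<Gamma>(x1 \<mapsto> A1, x2 \<mapsto> A2)) q q' e B; share A A1 A2;
          x1 \<noteq> x2; x1 \<notin> dom \<Gamma>; x2 \<notin> dom \<Gamma>; x \<notin> dom \<Gamma>;
          ok (\<Gamma>(x \<mapsto> A)) q q' B\<rbrakk>
         \<Longrightarrow> lbty K \<Sigma> (\<Gamma>(x \<mapsto> A)) q q' (EShare x x1 x2 e) B"
| TRelax: "\<lbrakk>lbty K \<Sigma> \<Gamma> p p' e A; p \<le> q; q - p \<le> q' - p'; ok \<Gamma> q q' A\<rbrakk>
         \<Longrightarrow> lbty K \<Sigma> \<Gamma> q q' e A"
| TWeak: "\<lbrakk>lbty K \<Sigma> \<Gamma> q q' e B; share A A A; x \<notin> dom \<Gamma>; ok (\<Gamma>(x \<mapsto> A)) q q' B\<rbrakk>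
         \<Longrightarrow> lbty K \<Sigma> (\<Gamma>(x \<mapsto> A)) q q' e B"
| TSub: "\<lbrakk>lbty K \<Sigma> \<Gamma> q q' e A; subty A B; ok \<Gamma> q q' B\<rbrakk>
         \<Longrightarrow> lbty K \<Sigma> \<Gamma> q q' e B"
| TSuper: "\<lbrakk>lbty K \<Sigma> (\<Gamma>(x \<mapsto> B)) q q' e C; subty A B; x \<notin> dom \<Gamma>; ok (\<Gamma>(x \<mapsto> A)) q q' C\<rbrakk>
         \<Longrightarrow> lbty K \<Sigma> (\<Gamma>(x \<mapsto> A)) q q' e C"

definition well_typed :: "costs \<Rightarrow> prog \<Rightarrow> signature \<Rightarrow> bool" where
  "well_typed K P \<Sigma> \<longleftrightarrow>
     (\<forall>f A1 q q' A2. (A1, q, q', A2) \<in> \<Sigma> f \<longrightarrow>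
        lbty K \<Sigma> [fst (P f) \<mapsto> A1] q q' (snd (P f)) A2)"

end

theory Submission
  imports Defs
begin

text \<open>
  Induction on the evaluation, generalised over all typings of the evaluated expression.
  A typing derivation ends in a block of structural rules above a syntax-directed rule, and
  no structural rule can increase the slack \<open>q + \<Phi>\<^sub>E(\<Gamma>) - (q' + \<Phi>(v:A))\<close>: relaxation
  raises \<open>q'\<close> at least as much as \<open>q\<close>, weakening adds a variable of potential zero, subtyping
  raises the potential of the result and supertyping lowers that of the context. So only the
  syntax-directed rules need checking, and through these the bound propagates from the
  premises because matching, sharing and consing merely move potential between the context,
  the counter and the result.
\<close>

lemma pot_share: "share A A1 A2 \<Longrightarrow> pot w A = pot w A1 + pot w A2"
proof (induction arbitrary: w rule: share.induct)
  case (4 A A1 A2 B B1 B2)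
  then show ?case by (cases w) auto
next
  case (5 A A1 A2 p p1 p2)
  then show ?case by (cases w) (auto simp: sum_list_addf algebra_simps)
qed (cases w; auto)+

lemma pot_eq_0_if_share_self: "share A A A \<Longrightarrow> pot w A = 0"
  using pot_share[of A A A w] by simp

lemma pot_mono_subty: "subty A B \<Longrightarrow> pot w A \<le> pot w B"
proof (induction arbitrary: w rule: subty.induct)
  case (4 A1 A2 p1 p2)
  show ?case
  proof (cases w)
    case (VList vs)
    have "of_nat (length vs) * p1 \<le> of_nat (length vs) * p2"
      using 4 by (simp add: mult_left_mono)
    moreover have "(\<Sum>v\<leftarrow>vs. pot v A1) \<le> (\<Sum>v\<leftarrow>vs. pot v A2)"
      using 4 by (intro sum_list_mono) auto
    ultimately show ?thesis using VList by simp
  qed auto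
next
  case (5 A1 A2 B1 B2)
  then show ?case by (cases w) (auto intro: add_mono)
qed (cases w; auto)+

lemma pot_atoms [simp]: "pot w AUnit = 0" "pot w ABool = 0" "pot w AInt = 0"
  by (cases w; simp)+

lemma lbty_finite_dom: "lbty K \<Sigma> \<Gamma> q q' e A \<Longrightarrow> finite (dom \<Gamma>)"
  \<comment> \<open>\<open>fun_upd_apply\<close> eta-expands the map updates; folding them back lets \<open>dom_fun_upd\<close> apply.\<close>
  by (induction rule: lbty.induct) (simp_all flip: fun_upd_def)

lemma pot_ctx_cong: "(\<And>y. y \<in> dom \<Gamma> \<Longrightarrow> E y = E' y) \<Longrightarrow> pot_ctx E \<Gamma> = pot_ctx E' \<Gamma>"
  unfolding pot_ctx_def by (rule sum.cong) auto

lemma pot_ctx_fun_upd: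
  "finite (dom \<Gamma>) \<Longrightarrow> x \<notin> dom \<Gamma> \<Longrightarrow>
   pot_ctx E (\<Gamma>(x \<mapsto> A)) = pot_ctx E \<Gamma> + pot (the (E x)) A"
  unfolding pot_ctx_def by (simp add: add.commute) (rule sum.cong; auto)

lemma pot_ctx_fun_upd_env:
  assumes "finite (dom \<Gamma>)" "x \<notin> dom \<Gamma>"
  shows "pot_ctx (E(x \<mapsto> w)) (\<Gamma>(x \<mapsto> A)) = pot_ctx E \<Gamma> + pot w A"
proof -
  have "pot_ctx (E(x \<mapsto> w)) \<Gamma> = pot_ctx E \<Gamma>"
    using assms(2) by (intro pot_ctx_cong) auto
  then show ?thesis using pot_ctx_fun_upd[OF assms] by simp
qed

lemma pot_ctx_map_add:
  assumes "finite (dom \<Gamma>1)" "finite (dom \<Gamma>2)" "dom \<Gamma>1 \<inter> dom \<Gamma>2 = {}"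
  shows "pot_ctx E (\<Gamma>1 ++ \<Gamma>2) = pot_ctx E \<Gamma>1 + pot_ctx E \<Gamma>2"
proof -
  have "pot_ctx E (\<Gamma>1 ++ \<Gamma>2) = (\<Sum>x\<in>dom \<Gamma>1 \<union> dom \<Gamma>2. pot (the (E x)) (the ((\<Gamma>1 ++ \<Gamma>2) x)))"
    by (simp add: pot_ctx_def Un_commute)
  also have "\<dots> = (\<Sum>x\<in>dom \<Gamma>1. pot (the (E x)) (the ((\<Gamma>1 ++ \<Gamma>2) x)))
      + (\<Sum>x\<in>dom \<Gamma>2. pot (the (E x)) (the ((\<Gamma>1 ++ \<Gamma>2) x)))"
    using assms by (simp add: sum.union_disjoint)
  also have "(\<Sum>x\<in>dom \<Gamma>1. pot (the (E x)) (the ((\<Gamma>1 ++ \<Gamma>2) x))) = pot_ctx E \<Gamma>1"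
    unfolding pot_ctx_def using assms(3)
    by (intro sum.cong) (auto simp: map_add_def split: option.splits)
  also have "(\<Sum>x\<in>dom \<Gamma>2. pot (the (E x)) (the ((\<Gamma>1 ++ \<Gamma>2) x))) = pot_ctx E \<Gamma>2"
    unfolding pot_ctx_def by (intro sum.cong) (auto simp: map_add_def split: option.splits)
  finally show ?thesis .
qed

text \<open>Judgements whose last rule is syntax-directed; the premises are arbitrary derivations.\<close>
inductive lbty_sd :: "costs \<Rightarrow> signature \<Rightarrow> ctx \<Rightarrow> rat \<Rightarrow> rat \<Rightarrow> expr \<Rightarrow> aty \<Rightarrow> bool" where
  SUnit: "lbty_sd K \<Sigma> Map.empty (K Kunit) 0 EUnit AUnit"
| STrue: "lbty_sd K \<Sigma> Map.empty (K Kbool) 0 ETrue ABool"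
| SFalse: "lbty_sd K \<Sigma> Map.empty (K Kbool) 0 EFalse ABool"
| SInt: "lbty_sd K \<Sigma> Map.empty (K Kint) 0 (EInt n) AInt"
| SNil: "lbty_sd K \<Sigma> Map.empty (K Knil) 0 ENil (AList p A)"
| SVar: "lbty_sd K \<Sigma> [x \<mapsto> A] (K Kvar) 0 (EVar x) A"
| SOpB: "x1 \<noteq> x2 \<Longrightarrow> lbty_sd K \<Sigma> [x1 \<mapsto> ABool, x2 \<mapsto> ABool] (K Kop) 0 (EOp op x1 x2) ABool"
| SOpC: "x1 \<noteq> x2 \<Longrightarrow> lbty_sd K \<Sigma> [x1 \<mapsto> AInt, x2 \<mapsto> AInt] (K Kop) 0 (EOp op x1 x2) ABool"
| SOpA: "x1 \<noteq> x2 \<Longrightarrow> lbty_sd K \<Sigma> [x1 \<mapsto> AInt, x2 \<mapsto> AInt] (K Kop) 0 (EOp op x1 x2) AInt"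
| SApp: "(A1, q, q', A2) \<in> \<Sigma> f \<Longrightarrow> lbty_sd K \<Sigma> [x \<mapsto> A1] (q + K Kapp) q' (EApp f x) A2"
| SLet: "\<lbrakk>lbty K \<Sigma> \<Gamma>1 (q - K Klet) q1 e1 A1; lbty K \<Sigma> (\<Gamma>2(x \<mapsto> A1)) q1 q' e2 A2;
          dom \<Gamma>1 \<inter> dom \<Gamma>2 = {}; x \<notin> dom \<Gamma>2\<rbrakk>
         \<Longrightarrow> lbty_sd K \<Sigma> (\<Gamma>1 ++ \<Gamma>2) q q' (ELet x e1 e2) A2"
| SIf: "\<lbrakk>lbty K \<Sigma> \<Gamma> (q - K Kcond) q' et A; lbty K \<Sigma> \<Gamma> (q - K Kcond) q' ef A; x \<notin> dom \<Gamma>\<rbrakk>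
         \<Longrightarrow> lbty_sd K \<Sigma> (\<Gamma>(x \<mapsto> ABool)) q q' (EIf x et ef) A"
| SPair: "x1 \<noteq> x2 \<Longrightarrow> lbty_sd K \<Sigma> [x1 \<mapsto> A1, x2 \<mapsto> A2] (K Kpair) 0 (EPair x1 x2) (APair A1 A2)"
| SMatchP: "\<lbrakk>lbty K \<Sigma> (\<Gamma>(x1 \<mapsto> A1, x2 \<mapsto> A2)) (q - K KmatchP) q' e A;
          x1 \<noteq> x2; x1 \<notin> dom \<Gamma>; x2 \<notin> dom \<Gamma>; x \<notin> dom \<Gamma>\<rbrakk>
         \<Longrightarrow> lbty_sd K \<Sigma> (\<Gamma>(x \<mapsto> APair A1 A2)) q q' (EMatchP x x1 x2 e) A"
| SCons: "xh \<noteq> xt \<Longrightarrow> lbty_sd K \<Sigma> [xh \<mapsto> A, xt \<mapsto> AList p A] (p + K Kcons) 0 (ECons xh xt) (AList p A)"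
| SMatchL: "\<lbrakk>lbty K \<Sigma> \<Gamma> (q - K KmatchN) q' e1 B;
          lbty K \<Sigma> (\<Gamma>(xh \<mapsto> A, xt \<mapsto> AList p A)) (q + p - K KmatchL) q' e2 B;
          xh \<noteq> xt; xh \<notin> dom \<Gamma>; xt \<notin> dom \<Gamma>; x \<notin> dom \<Gamma>\<rbrakk>
         \<Longrightarrow> lbty_sd K \<Sigma> (\<Gamma>(x \<mapsto> AList p A)) q q' (EMatchL x e1 xh xt e2) B"
| SShare: "\<lbrakk>lbty K \<Sigma> (\<Gamma>(x1 \<mapsto> A1, x2 \<mapsto> A2)) q q' e B; share A A1 A2;
          x1 \<noteq> x2; x1 \<notin> dom \<Gamma>; x2 \<notin> dom \<Gamma>; x \<notin> dom \<Gamma>\<rbrakk>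
         \<Longrightarrow> lbty_sd K \<Sigma> (\<Gamma>(x \<mapsto> A)) q q' (EShare x x1 x2 e) B"

definition lb_sound :: "costs \<Rightarrow> prog \<Rightarrow> signature \<Rightarrow> env \<Rightarrow> rat \<Rightarrow> rat \<Rightarrow> expr \<Rightarrow> vl \<Rightarrow> bool" where
  "lb_sound K P \<Sigma> E p p' e v \<longleftrightarrow>
     (\<forall>\<Gamma> q q' A. lbty K \<Sigma> \<Gamma> q q' e A \<longrightarrow> q + pot_ctx E \<Gamma> - (q' + pot v A) \<le> p - p')"

lemma lb_soundI:
  assumes "\<And>\<Gamma> q q' A. lbty_sd K \<Sigma> \<Gamma> q q' e A \<Longrightarrow> q + pot_ctx E \<Gamma> - (q' + pot v A) \<le> p - p'"
  shows "lb_sound K P \<Sigma> E p p' e v"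
  unfolding lb_sound_def
proof (intro allI impI)
  fix \<Gamma> q q' A
  assume "lbty K \<Sigma> \<Gamma> q q' e A"
  then show "q + pot_ctx E \<Gamma> - (q' + pot v A) \<le> p - p'"
    using assms
  proof (induction rule: lbty.induct)
    case (TRelax K \<Sigma> \<Gamma> r r' e A q q')
    then show ?case by fastforce
  next
    case (TWeak K \<Sigma> \<Gamma> q q' e B A x)
    have "pot_ctx E (\<Gamma>(x \<mapsto> A)) = pot_ctx E \<Gamma>"
      using pot_ctx_fun_upd[OF lbty_finite_dom[OF TWeak.hyps(1)] TWeak.hyps(3)]
        pot_eq_0_if_share_self[OF TWeak.hyps(2)] by simp
    then show ?case using TWeak.IH[OF TWeak.prems] by linarith
  next
    case (TSub K \<Sigma> \<Gamma> q q' e A B)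
    then show ?case using pot_mono_subty[OF TSub.hyps(2), of v] by fastforce
  next
    case (TSuper K \<Sigma> \<Gamma> x B q q' e C A)
    have "finite (dom \<Gamma>)"
      using lbty_finite_dom[OF TSuper.hyps(1)] by simp
    then have "pot_ctx E (\<Gamma>(x \<mapsto> A)) \<le> pot_ctx E (\<Gamma>(x \<mapsto> B))"
      using pot_ctx_fun_upd[OF _ TSuper.hyps(3)] pot_mono_subty[OF TSuper.hyps(2)] by simp
    then show ?case using TSuper.IH[OF TSuper.prems] by linarith
  qed (blast intro: lbty_sd.intros)+
qed

lemma lbty_imp_lb_bound:
  "lb_sound K P \<Sigma> E p p' e v \<Longrightarrow> lbty K \<Sigma> \<Gamma> q q' e A \<Longrightarrow>
   q + pot_ctx E \<Gamma> - (q' + pot v A) \<le> p - p'"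
  unfolding lb_sound_def by blast

lemma lb_sound_let:
  assumes "lb_sound K P \<Sigma> E (p - K Klet) p1 e1 v1"
    and "lb_sound K P \<Sigma> (E(x \<mapsto> v1)) p1 p' e2 v"
  shows "lb_sound K P \<Sigma> E p p' (ELet x e1 e2) v"
proof (rule lb_soundI)
  fix \<Gamma> q q' B
  assume "lbty_sd K \<Sigma> \<Gamma> q q' (ELet x e1 e2) B"
  then obtain \<Gamma>1 \<Gamma>2 A1 q1 where \<Gamma>: "\<Gamma> = \<Gamma>1 ++ \<Gamma>2" "dom \<Gamma>1 \<inter> dom \<Gamma>2 = {}" "x \<notin> dom \<Gamma>2"
    and e1: "lbty K \<Sigma> \<Gamma>1 (q - K Klet) q1 e1 A1" and e2: "lbty K \<Sigma> (\<Gamma>2(x \<mapsto> A1)) q1 q' e2 B"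
    by cases auto
  have fin1: "finite (dom \<Gamma>1)" and fin2: "finite (dom \<Gamma>2)"
    using lbty_finite_dom[OF e1] lbty_finite_dom[OF e2] by simp_all
  have "(q - K Klet) + pot_ctx E \<Gamma>1 - (q1 + pot v1 A1) \<le> (p - K Klet) - p1"
    using lbty_imp_lb_bound[OF assms(1) e1] .
  moreover have "q1 + (pot_ctx E \<Gamma>2 + pot v1 A1) - (q' + pot v B) \<le> p1 - p'"
    using lbty_imp_lb_bound[OF assms(2) e2] pot_ctx_fun_upd_env[OF fin2 \<Gamma>(3)] by simp
  moreover have "pot_ctx E \<Gamma> = pot_ctx E \<Gamma>1 + pot_ctx E \<Gamma>2"
    using pot_ctx_map_add[OF fin1 fin2 \<Gamma>(2)] \<Gamma>(1) by simp
  ultimately show "q + pot_ctx E \<Gamma> - (q' + pot v B) \<le> p - p'" by linarith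
qed

lemma lb_sound_app:
  assumes "well_typed K P \<Sigma>" "P f = (y, ef)" "E x = Some u"
    and "lb_sound K P \<Sigma> (E(y \<mapsto> u)) p p' ef v"
  shows "lb_sound K P \<Sigma> E (p + K Kapp) p' (EApp f x) v"
proof (rule lb_soundI)
  fix \<Gamma> q q' B
  assume "lbty_sd K \<Sigma> \<Gamma> q q' (EApp f x) B"
  then obtain A1 r where "\<Gamma> = [x \<mapsto> A1]" "q = r + K Kapp" "(A1, r, q', B) \<in> \<Sigma> f"
    by cases auto
  moreover from this(3) have "lbty K \<Sigma> [y \<mapsto> A1] r q' ef B"
    using assms(1,2) unfolding well_typed_def by (metis fst_conv snd_conv)
  ultimately show "q + pot_ctx E \<Gamma> - (q' + pot v B) \<le> p + K Kapp - p'"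
    using lbty_imp_lb_bound[OF assms(4)] assms(3) by (force simp: pot_ctx_def)
qed

lemma lb_sound_if:
  assumes "E x = Some (VBool b)"
    and "lb_sound K P \<Sigma> E (p - K Kcond) p' (if b then et else ef) v"
  shows "lb_sound K P \<Sigma> E p p' (EIf x et ef) v"
proof (rule lb_soundI)
  fix \<Gamma> q q' B
  assume "lbty_sd K \<Sigma> \<Gamma> q q' (EIf x et ef) B"
  then obtain \<Gamma>0 where \<Gamma>: "\<Gamma> = \<Gamma>0(x \<mapsto> ABool)" "x \<notin> dom \<Gamma>0"
    and branch: "lbty K \<Sigma> \<Gamma>0 (q - K Kcond) q' (if b then et else ef) B"
    by cases auto
  have "pot_ctx E \<Gamma> = pot_ctx E \<Gamma>0"
    using \<Gamma> pot_ctx_fun_upd[OF lbty_finite_dom[OF branch] \<Gamma>(2)] by simp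
  then show "q + pot_ctx E \<Gamma> - (q' + pot v B) \<le> p - p'"
    using lbty_imp_lb_bound[OF assms(2) branch] by linarith
qed

lemma lb_sound_match_pair:
  assumes "E x = Some (VPair v1 v2)"
    and "lb_sound K P \<Sigma> (E(x1 \<mapsto> v1, x2 \<mapsto> v2)) (p - K KmatchP) p' e v"
  shows "lb_sound K P \<Sigma> E p p' (EMatchP x x1 x2 e) v"
proof (rule lb_soundI)
  fix \<Gamma> q q' B
  assume "lbty_sd K \<Sigma> \<Gamma> q q' (EMatchP x x1 x2 e) B"
  then obtain \<Gamma>0 A1 A2 where \<Gamma>: "\<Gamma> = \<Gamma>0(x \<mapsto> APair A1 A2)"
    "x1 \<noteq> x2" "x1 \<notin> dom \<Gamma>0" "x2 \<notin> dom \<Gamma>0" "x \<notin> dom \<Gamma>0"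
    and body: "lbty K \<Sigma> (\<Gamma>0(x1 \<mapsto> A1, x2 \<mapsto> A2)) (q - K KmatchP) q' e B"
    by cases auto
  have fin: "finite (dom \<Gamma>0)" using lbty_finite_dom[OF body] by simp
  have "pot_ctx (E(x1 \<mapsto> v1, x2 \<mapsto> v2)) (\<Gamma>0(x1 \<mapsto> A1, x2 \<mapsto> A2))
      = pot_ctx E \<Gamma>0 + pot v1 A1 + pot v2 A2"
    using fin \<Gamma>(2-4) by (simp add: pot_ctx_fun_upd_env)
  moreover have "pot_ctx E \<Gamma> = pot_ctx E \<Gamma>0 + pot v1 A1 + pot v2 A2"
    using \<Gamma>(1) pot_ctx_fun_upd[OF fin \<Gamma>(5)] assms(1) by simp
  ultimately show "q + pot_ctx E \<Gamma> - (q' + pot v B) \<le> p - p'"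
    using lbty_imp_lb_bound[OF assms(2) body] by linarith
qed

lemma lb_sound_match_nil:
  assumes "E x = Some (VList [])"
    and "lb_sound K P \<Sigma> E (p - K KmatchN) p' e1 v"
  shows "lb_sound K P \<Sigma> E p p' (EMatchL x e1 xh xt e2) v"
proof (rule lb_soundI)
  fix \<Gamma> q q' B
  assume "lbty_sd K \<Sigma> \<Gamma> q q' (EMatchL x e1 xh xt e2) B"
  then obtain \<Gamma>0 A r where \<Gamma>: "\<Gamma> = \<Gamma>0(x \<mapsto> AList r A)" "x \<notin> dom \<Gamma>0"
    and nil: "lbty K \<Sigma> \<Gamma>0 (q - K KmatchN) q' e1 B"
    by cases auto
  have "pot_ctx E \<Gamma> = pot_ctx E \<Gamma>0"
    using \<Gamma> pot_ctx_fun_upd[OF lbty_finite_dom[OF nil] \<Gamma>(2)] assms(1) by simp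
  then show "q + pot_ctx E \<Gamma> - (q' + pot v B) \<le> p - p'"
    using lbty_imp_lb_bound[OF assms(2) nil] by linarith
qed

lemma lb_sound_match_cons:
  assumes "E x = Some (VList (v1 # vs))"
    and "lb_sound K P \<Sigma> (E(xh \<mapsto> v1, xt \<mapsto> VList vs)) (p - K KmatchL) p' e2 v"
  shows "lb_sound K P \<Sigma> E p p' (EMatchL x e1 xh xt e2) v"
proof (rule lb_soundI)
  fix \<Gamma> q q' B
  assume "lbty_sd K \<Sigma> \<Gamma> q q' (EMatchL x e1 xh xt e2) B"
  then obtain \<Gamma>0 A r where \<Gamma>: "\<Gamma> = \<Gamma>0(x \<mapsto> AList r A)"
    "xh \<noteq> xt" "xh \<notin> dom \<Gamma>0" "xt \<notin> dom \<Gamma>0" "x \<notin> dom \<Gamma>0"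
    and cons: "lbty K \<Sigma> (\<Gamma>0(xh \<mapsto> A, xt \<mapsto> AList r A)) (q + r - K KmatchL) q' e2 B"
    by cases auto
  have fin: "finite (dom \<Gamma>0)" using lbty_finite_dom[OF cons] by simp
  have "pot_ctx (E(xh \<mapsto> v1, xt \<mapsto> VList vs)) (\<Gamma>0(xh \<mapsto> A, xt \<mapsto> AList r A))
      = pot_ctx E \<Gamma>0 + pot v1 A + pot (VList vs) (AList r A)"
    using fin \<Gamma>(2-4) by (simp add: pot_ctx_fun_upd_env)
  moreover have "pot_ctx E \<Gamma> = pot_ctx E \<Gamma>0 + r + pot v1 A + pot (VList vs) (AList r A)"
    using \<Gamma>(1) pot_ctx_fun_upd[OF fin \<Gamma>(5)] assms(1) by (simp add: algebra_simps)
  ultimately show "q + pot_ctx E \<Gamma> - (q' + pot v B) \<le> p - p'"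
    using lbty_imp_lb_bound[OF assms(2) cons] by linarith
qed

lemma lb_sound_share:
  assumes "E x = Some w"
    and "lb_sound K P \<Sigma> ((E(x := None))(x1 \<mapsto> w, x2 \<mapsto> w)) p p' e v"
  shows "lb_sound K P \<Sigma> E p p' (EShare x x1 x2 e) v"
proof (rule lb_soundI)
  fix \<Gamma> q q' B
  assume "lbty_sd K \<Sigma> \<Gamma> q q' (EShare x x1 x2 e) B"
  then obtain \<Gamma>0 A A1 A2 where \<Gamma>: "\<Gamma> = \<Gamma>0(x \<mapsto> A)" "share A A1 A2"
    "x1 \<noteq> x2" "x1 \<notin> dom \<Gamma>0" "x2 \<notin> dom \<Gamma>0" "x \<notin> dom \<Gamma>0"
    and body: "lbty K \<Sigma> (\<Gamma>0(x1 \<mapsto> A1, x2 \<mapsto> A2)) q q' e B"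
    by cases auto
  have fin: "finite (dom \<Gamma>0)" using lbty_finite_dom[OF body] by simp
  have "pot_ctx (E(x := None)) \<Gamma>0 = pot_ctx E \<Gamma>0"
    using \<Gamma>(6) by (intro pot_ctx_cong) auto
  then have "pot_ctx ((E(x := None))(x1 \<mapsto> w, x2 \<mapsto> w)) (\<Gamma>0(x1 \<mapsto> A1, x2 \<mapsto> A2))
      = pot_ctx E \<Gamma>0 + pot w A1 + pot w A2"
    using fin \<Gamma>(3-5) by (simp add: pot_ctx_fun_upd_env)
  moreover have "pot_ctx E \<Gamma> = pot_ctx E \<Gamma>0 + pot w A1 + pot w A2"
    using \<Gamma>(1) pot_ctx_fun_upd[OF fin \<Gamma>(6)] assms(1) pot_share[OF \<Gamma>(2)] by simp
  ultimately show "q + pot_ctx E \<Gamma> - (q' + pot v B) \<le> p - p'"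
    using lbty_imp_lb_bound[OF assms(2) body] by linarith
qed

lemma bigstep_lb_sound:
  "bigstep K P E p p' e v \<Longrightarrow> well_typed K P \<Sigma> \<Longrightarrow> lb_sound K P \<Sigma> E p p' e v"
proof (induction rule: bigstep.induct)
  case BApp
  then show ?case by (blast intro: lb_sound_app)
next
  case BLet
  then show ?case by (blast intro: lb_sound_let)
next
  case BIfT
  then show ?case by (auto intro: lb_sound_if[where b = True])
next
  case BIfF
  then show ?case by (auto intro: lb_sound_if[where b = False])
next
  case BMatchP
  then show ?case by (blast intro: lb_sound_match_pair)
next
  case BMatchN
  then show ?case by (blast intro: lb_sound_match_nil)
next
  case BMatchC
  then show ?case by (blast intro: lb_sound_match_cons)
next
  case BShare
  then show ?case by (blast intro: lb_sound_share)
qed (rule lb_soundI, erule lbty_sd.cases; simp add: pot_ctx_def algebra_simps)+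

theorem theorem6:
  fixes K :: costs and P :: prog and \<Sigma> :: signature
    and E :: env and \<Gamma> :: ctx and e :: expr and v :: vl
    and A :: aty and q q' :: rat
  assumes "valid_sig \<Sigma>"
    and "well_typed K P \<Sigma>"
    and "env_typed E \<Gamma>"
    and "evaluates K P E e v"
    and "lbty K \<Sigma> \<Gamma> q q' e A"
  shows "\<forall>p p'. 0 \<le> p \<longrightarrow> 0 \<le> p' \<longrightarrow> bigstep K P E p p' e v \<longrightarrow>
           q + pot_ctx E \<Gamma> - (q' + pot v A) \<le> p - p'"
  \<comment> \<open>Only the typing of the program is needed: \<open>lbty\<close> enforces nonnegative annotations
    itself, and the evaluation already defines every variable whose potential is counted.\<close>
  using bigstep_lb_sound assms(2,5) lbty_imp_lb_bound by blast

end
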